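(* Let $\Gamma_1$ and $\Gamma_2$ be signed graphs whose signed subdivision graphs $S(\Gamma_1)$ and $S(\Gamma_2)$ are noncospectral and equienergetic. Let $p$ be a positive integer and $k\in\{p,p-1\}$. Then (i) $S_p(\Gamma_1)$ and $S_p(\Gamma_2)$ are noncospectral and equienergetic; (ii) $S_p^k(\Gamma_1)$ and $S_p^k(\Gamma_2)$ are noncospectral and equienergetic.
   Context: A signed graph $\Gamma=(G,\sigma)$ is a simple graph $G$ with a sign function $\sigma:E(G)\to\{1,-1\}$; $A(\Gamma)$ has $(i,j)$ entry $\sigma(v_iv_j)$ if $v_iv_j\in E(G)$ and $0$ otherwise. The energy of a signed graph is the sum of the absolute values of its adjacency eigenvalues; two signed graphs are equienergetic if they have equal energy, and noncospectral if their adjacency spectra (with multiplicities) differ. Orientation: fix $\vartheta(v,e)\in\{1,-1\}$ for each vertex $v$ incident with edge $e$, such that for every edge $e=vw$, $\vartheta(v,e)\vartheta(w,e)=-\sigma(e)$. $S_p(\Gamma)$ ($p\ge1$): vertex set $V(G)\cup\{e_j^{(t)}:1\le j\le m,1\le t\le p\}$, edges exactly $v\,e_j^{(t)}$ for $v$ an end of $e_j$, with sign $\vartheta(v,e_j)$; $S(\Gamma)=S_1(\Gamma)$ is the signed subdivision graph. $S_p^k(\Gamma)$: vertex set $\{v_i^{(s)}:1\le i\le n,0\le s\le p\}\cup\{e_j^{(t)}:1\le j\le m,0\le t\le k\}$, edges exactly $v_i^{(s)}e_j^{(t)}$ for $v_i$ an end of $e_j$, with sign $\vartheta(v_i,e_j)$.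 *)

theory Defs
  imports "HOL-Computational_Algebra.Computational_Algebra" "Jordan_Normal_Form.Char_Poly"
begin

(* A signed graph Gamma = (G, sigma) on vertex set {0..<n} with m edges.
   Edge j (j < m) has end vertices fst (ed j) and snd (ed j); sg j is its sign.
   th i j = theta(v_i, e_j) is the orientation value of vertex i on edge j. *)

definition incident :: "(nat \<Rightarrow> nat \<times> nat) \<Rightarrow> nat \<Rightarrow> nat \<Rightarrow> bool" where
  "incident ed i j \<longleftrightarrow> i = fst (ed j) \<or> i = snd (ed j)"

definition signed_graph :: "nat \<Rightarrow> nat \<Rightarrow> (nat \<Rightarrow> nat \<times> nat) \<Rightarrow> (nat \<Rightarrow> int) \<Rightarrow> bool" where
  "signed_graph n m ed sg \<longleftrightarrow>
     (\<forall>j<m. fst (ed j) < n \<and> snd (ed j) < n \<and> fst (ed j) \<noteq> snd (ed j) \<and> sg j \<in> {1, -1}) \<and>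
     (\<forall>j<m. \<forall>j'<m. j \<noteq> j' \<longrightarrow> {fst (ed j), snd (ed j)} \<noteq> {fst (ed j'), snd (ed j')})"

definition orientation :: "nat \<Rightarrow> (nat \<Rightarrow> nat \<times> nat) \<Rightarrow> (nat \<Rightarrow> int) \<Rightarrow> (nat \<Rightarrow> nat \<Rightarrow> int) \<Rightarrow> bool" where
  "orientation m ed sg th \<longleftrightarrow>
     (\<forall>j<m. th (fst (ed j)) j \<in> {1, -1} \<and> th (snd (ed j)) j \<in> {1, -1} \<and>
            th (fst (ed j)) j * th (snd (ed j)) j = - sg j)"

(* Adjacency matrix of S_p(Gamma): vertices v_i at index i (i < n),
   e_j^(t) (1 <= t <= p) at index n + (t-1)*m + j. *)
definition Sp_adj :: "nat \<Rightarrow> nat \<Rightarrow> (nat \<Rightarrow> nat \<times> nat) \<Rightarrow> (nat \<Rightarrow> nat \<Rightarrow> int) \<Rightarrow> nat \<Rightarrow> real mat" where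
  "Sp_adj n m ed th p = mat (n + p * m) (n + p * m) (\<lambda>(a, b).
     if a < n \<and> n \<le> b \<and> incident ed a ((b - n) mod m) then real_of_int (th a ((b - n) mod m))
     else if b < n \<and> n \<le> a \<and> incident ed b ((a - n) mod m) then real_of_int (th b ((a - n) mod m))
     else 0)"

definition S_adj :: "nat \<Rightarrow> nat \<Rightarrow> (nat \<Rightarrow> nat \<times> nat) \<Rightarrow> (nat \<Rightarrow> nat \<Rightarrow> int) \<Rightarrow> real mat" where
  "S_adj n m ed th = Sp_adj n m ed th 1"

(* Adjacency matrix of S_p^k(Gamma): v_i^(s) (0 <= s <= p) at index s*n + i,
   e_j^(t) (0 <= t <= k) at index (p+1)*n + t*m + j. *)
definition Spk_adj :: "nat \<Rightarrow> nat \<Rightarrow> (nat \<Rightarrow> nat \<times> nat) \<Rightarrow> (nat \<Rightarrow> nat \<Rightarrow> int) \<Rightarrow> nat \<Rightarrow> nat \<Rightarrow> real mat" where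
  "Spk_adj n m ed th p k = (let N = (p + 1) * n in
     mat (N + (k + 1) * m) (N + (k + 1) * m) (\<lambda>(a, b).
     if a < N \<and> N \<le> b \<and> incident ed (a mod n) ((b - N) mod m) then real_of_int (th (a mod n) ((b - N) mod m))
     else if b < N \<and> N \<le> a \<and> incident ed (b mod n) ((a - N) mod m) then real_of_int (th (b mod n) ((a - N) mod m))
     else 0))"

definition spectrum_mset :: "real mat \<Rightarrow> complex multiset" where
  "spectrum_mset A = proots (char_poly (map_mat complex_of_real A))"

definition energy :: "real mat \<Rightarrow> real" where
  "energy A = (\<Sum>x\<in>#spectrum_mset A. cmod x)"

definition cospectral :: "real mat \<Rightarrow> real mat \<Rightarrow> bool" where
  "cospectral A B \<longleftrightarrow> spectrum_mset A = spectrum_mset B"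

definition equienergetic :: "real mat \<Rightarrow> real mat \<Rightarrow> bool" where
  "equienergetic A B \<longleftrightarrow> energy A = energy B"

end

(*
  S_p^k(Gamma) is obtained from the subdivision graph S(Gamma) by taking p + 1 copies of every
  vertex v_i and k + 1 copies of every edge vertex e_j, so its adjacency matrix is P A P^T,
  where A is the adjacency matrix of S(Gamma) and P the 0/1 matrix of this copying map.
  By Sylvester's identity P A P^T has, up to zero eigenvalues, the spectrum of A P^T P, which is
  A with its vertex columns scaled by p + 1 and its edge columns by k + 1. As S(Gamma) is
  bipartite, a diagonal similarity turns this into sqrt((p + 1)(k + 1)) A. Hence the nonzero
  spectrum of S_p^k(Gamma) is that of S(Gamma) scaled by sqrt((p + 1)(k + 1)), and energies
  scale by the same factor. Conversely, cospectral S_p^k(Gamma_1), S_p^k(Gamma_2) force equal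
  nonzero spectra of the S(Gamma_i); the sum of the squared eigenvalues, trace A^2 = 4m, then
  recovers m, the order of S_p^k recovers n, and so the S(Gamma_i) would be cospectral.
  Finally S_p(Gamma) = S_0^(p-1)(Gamma).
*)
theory Submission
  imports Defs "Jordan_Normal_Form.Schur_Decomposition"
begin

lemma sum_lessThan_add:
  fixes f :: "nat \<Rightarrow> 'a::comm_monoid_add"
  shows "(\<Sum>i<n + m. f i) = (\<Sum>i<n. f i) + (\<Sum>j<m. f (n + j))"
  by (induction m) (simp_all add: add.assoc)

lemma card_residue_class:
  assumes "j < m"
  shows "card {a. a < q * m \<and> a mod m = j} = q"
proof -
  have "{a. a < q * m \<and> a mod m = j} = (\<lambda>i. i * m + j) ` {..<q}"
  proof (intro equalityI subsetI)
    fix a assume a: "a \<in> {a. a < q * m \<and> a mod m = j}"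
    then have "a div m < q"
      by (simp add: less_mult_imp_div_less)
    moreover have "a = a div m * m + j"
      using a div_mult_mod_eq[of a m] by simp
    ultimately show "a \<in> (\<lambda>i. i * m + j) ` {..<q}"
      by blast
  next
    fix a assume "a \<in> (\<lambda>i. i * m + j) ` {..<q}"
    then obtain i where "i < q" "a = i * m + j"
      by blast
    moreover have "i * m + j < Suc i * m"
      using assms by simp
    moreover have "Suc i * m \<le> q * m"
      using \<open>i < q\<close> by (intro mult_le_mono1) simp
    ultimately show "a \<in> {a. a < q * m \<and> a mod m = j}"
      using assms by simp
  qed
  moreover have "inj_on (\<lambda>i. i * m + j) {..<q}"
    using assms by (auto simp: inj_on_def)
  ultimately show ?thesis
    by (simp add: card_image)
qed

lemma image_mset_mult_cancel:
  fixes c :: "'a::field"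
  assumes "c \<noteq> 0" and "image_mset ((*) c) A = image_mset ((*) c) B"
  shows "A = B"
proof -
  have "image_mset (\<lambda>z. z / c) (image_mset ((*) c) A) =
      image_mset (\<lambda>z. z / c) (image_mset ((*) c) B)"
    using assms(2) by simp
  then show ?thesis
    using assms(1) by (simp add: multiset.map_comp comp_def)
qed

lemma image_mset_mult_pad_cancel:
  fixes c :: "'a::field"
  assumes "c \<noteq> 0"
    and S1: "S + replicate_mset a1 0 = image_mset ((*) c) D1 + replicate_mset N 0"
    and S2: "S + replicate_mset a2 0 = image_mset ((*) c) D2 + replicate_mset N 0"
  shows "D1 + replicate_mset a2 0 = D2 + replicate_mset a1 0"
proof -
  have "image_mset ((*) c) (D1 + replicate_mset a2 0) + replicate_mset N 0 =
      (image_mset ((*) c) D1 + replicate_mset N 0) + replicate_mset a2 0"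
    by (simp add: ac_simps)
  also have "\<dots> = (S + replicate_mset a1 0) + replicate_mset a2 0"
    by (simp only: S1)
  also have "\<dots> = (S + replicate_mset a2 0) + replicate_mset a1 0"
    by (simp only: ac_simps)
  also have "\<dots> = (image_mset ((*) c) D2 + replicate_mset N 0) + replicate_mset a1 0"
    by (simp only: S2)
  also have "\<dots> = image_mset ((*) c) (D2 + replicate_mset a1 0) + replicate_mset N 0"
    by (simp add: ac_simps)
  finally show ?thesis
    using image_mset_mult_cancel[OF \<open>c \<noteq> 0\<close>] by simp
qed

section \<open>Spectra of products and of triangularizable matrices\<close>

lemma poly_char_poly:
  fixes A :: "'a::field mat"
  assumes "A \<in> carrier_mat n n"
  shows "poly (char_poly A) x = det (x \<cdot>\<^sub>m 1\<^sub>m n - A)"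
proof -
  have "- char_matrix A x = x \<cdot>\<^sub>m 1\<^sub>m n - A"
    using assms by (intro eq_matI) (auto simp: char_matrix_def)
  then show ?thesis
    using char_poly_matrix[OF assms] by simp
qed

lemma char_poly_nonzero: "A \<in> carrier_mat n n \<Longrightarrow> char_poly A \<noteq> 0"
  using degree_monic_char_poly[of A n] by auto

lemma det_sylvester:
  fixes X Y :: "'a::field mat"
  assumes X: "X \<in> carrier_mat N M" and Y: "Y \<in> carrier_mat M N"
  shows "x ^ M * det (x \<cdot>\<^sub>m 1\<^sub>m N - X * Y) = x ^ N * det (x \<cdot>\<^sub>m 1\<^sub>m M - Y * X)"
proof -
  \<comment> \<open>\<open>L * Q\<close> and \<open>R * Q\<close> are block triangular, with the two determinants of interest
    among their diagonal blocks.\<close>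
  define L where "L = four_block_mat (x \<cdot>\<^sub>m 1\<^sub>m N) (- X) (0\<^sub>m M N) (1\<^sub>m M)"
  define Q where "Q = four_block_mat (1\<^sub>m N) X Y (x \<cdot>\<^sub>m 1\<^sub>m M)"
  define R where "R = four_block_mat (1\<^sub>m N) (0\<^sub>m N M) (- Y) (1\<^sub>m M)"
  note simps = mult_smult_assoc_mat[of _ N N] mult_smult_distrib[of _ N M]
    mult_smult_assoc_mat[of _ M M] mult_smult_distrib[of _ M N]
    add_uminus_minus_mat[of _ N N] add_uminus_minus_mat[of _ M M]
  have LQ: "L * Q = four_block_mat (x \<cdot>\<^sub>m 1\<^sub>m N - X * Y) (0\<^sub>m N M) Y (x \<cdot>\<^sub>m 1\<^sub>m M)"
    unfolding L_def Q_def using X Y by (subst mult_four_block_mat) (auto simp: simps)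
  have RQ: "R * Q = four_block_mat (1\<^sub>m N) X (0\<^sub>m M N) (x \<cdot>\<^sub>m 1\<^sub>m M - Y * X)"
    unfolding R_def Q_def using X Y by (subst mult_four_block_mat) (auto simp: simps)
  have "det (L * Q) = det (x \<cdot>\<^sub>m 1\<^sub>m N - X * Y) * x ^ M"
    unfolding LQ using X Y by (subst det_four_block_mat_upper_right_zero[of _ N _ M]) auto
  moreover have "det (R * Q) = det (x \<cdot>\<^sub>m 1\<^sub>m M - Y * X)"
    unfolding RQ using X Y by (subst det_four_block_mat_lower_left_zero[of _ N _ M]) auto
  moreover have "det L = x ^ N"
    unfolding L_def using X by (subst det_four_block_mat_lower_left_zero[of _ N _ M]) auto
  moreover have "det R = 1"
    unfolding R_def using Y by (subst det_four_block_mat_upper_right_zero[of _ N _ M]) auto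
  moreover have "L \<in> carrier_mat (N + M) (N + M)" "R \<in> carrier_mat (N + M) (N + M)"
    "Q \<in> carrier_mat (N + M) (N + M)"
    unfolding L_def R_def Q_def using X Y by auto
  ultimately show ?thesis
    by (simp add: det_mult mult.commute)
qed

lemma proots_char_poly_mult_commute:
  fixes X Y :: "'a::field_char_0 mat"
  assumes X: "X \<in> carrier_mat N M" and Y: "Y \<in> carrier_mat M N"
  shows "proots (char_poly (X * Y)) + replicate_mset M 0 =
    proots (char_poly (Y * X)) + replicate_mset N 0"
proof -
  have XY: "X * Y \<in> carrier_mat N N" and YX: "Y * X \<in> carrier_mat M M"
    using X Y by auto
  have "monom 1 M * char_poly (X * Y) = monom 1 N * char_poly (Y * X)"
    by (rule poly_eq_poly_eq_iff[THEN iffD1], rule ext)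
      (simp add: poly_monom poly_char_poly[OF XY] poly_char_poly[OF YX] det_sylvester[OF X Y])
  moreover have "proots (monom (1::'a) K) = replicate_mset K 0" for K
    by (simp add: monom_altdef proots_power)
  ultimately show ?thesis
    using char_poly_nonzero[OF XY] char_poly_nonzero[OF YX]
    by (metis proots_mult monom_eq_0_iff one_neq_zero add.commute)
qed

lemma proots_prod_linear_factors: "proots (\<Prod>a\<leftarrow>as. [:- a, 1:]) = mset (as :: 'a::idom list)"
proof (induction as)
  case (Cons a as)
  have "(\<Prod>a\<leftarrow>as. [:- a, 1:]) \<noteq> 0"
    by (auto simp: prod_list_zero_iff)
  with Cons show ?case
    by (simp add: proots_mult del: mult_pCons_left)
qed simp

lemma proots_char_poly_upper_triangular:
  assumes "B \<in> carrier_mat n n" and "upper_triangular B"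
  shows "proots (char_poly B) = mset (diag_mat B)"
  by (simp add: char_poly_upper_triangular[OF assms] proots_prod_linear_factors)

lemma schur_triangularization:
  fixes A :: "complex mat"
  assumes "A \<in> carrier_mat n n"
  obtains B where "B \<in> carrier_mat n n" "upper_triangular B" "similar_mat A B"
  using char_poly_factorized[OF assms] schur_decomposition_exists[OF assms] by blast

lemma proots_char_poly_smult:
  fixes A :: "complex mat"
  assumes "A \<in> carrier_mat n n"
  shows "proots (char_poly (c \<cdot>\<^sub>m A)) = image_mset ((*) c) (proots (char_poly A))"
proof -
  obtain B where B: "B \<in> carrier_mat n n" "upper_triangular B" "similar_mat A B"
    using schur_triangularization[OF assms] .
  have cB: "c \<cdot>\<^sub>m B \<in> carrier_mat n n" "upper_triangular (c \<cdot>\<^sub>m B)"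
    using B by (auto simp: upper_triangular_def)
  have "diag_mat (c \<cdot>\<^sub>m B) = map ((*) c) (diag_mat B)"
    using B(1) by (simp add: diag_mat_def)
  then show ?thesis
    using proots_char_poly_upper_triangular[OF cB] proots_char_poly_upper_triangular[OF B(1,2)]
    by (simp add: char_poly_similar[OF similar_mat_smult[OF B(3)]] char_poly_similar[OF B(3)])
qed

definition mat_trace :: "'a::comm_ring_1 mat \<Rightarrow> 'a" where
  "mat_trace A = (\<Sum>i<dim_row A. A $$ (i, i))"

lemma mat_trace_mult_commute:
  fixes X Y :: "'a::comm_ring_1 mat"
  assumes "X \<in> carrier_mat n m" and "Y \<in> carrier_mat m n"
  shows "mat_trace (X * Y) = mat_trace (Y * X)"
proof -
  have "mat_trace (X * Y) = (\<Sum>i<n. \<Sum>j<m. X $$ (i, j) * Y $$ (j, i))"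
    using assms by (simp add: mat_trace_def scalar_prod_def atLeast0LessThan)
  also have "\<dots> = (\<Sum>j<m. \<Sum>i<n. Y $$ (j, i) * X $$ (i, j))"
    by (subst sum.swap) (simp add: mult.commute)
  also have "\<dots> = mat_trace (Y * X)"
    using assms by (simp add: mat_trace_def scalar_prod_def atLeast0LessThan)
  finally show ?thesis .
qed

lemma mat_trace_similar:
  assumes "similar_mat A B"
  shows "mat_trace A = mat_trace B"
proof -
  obtain n P Q where PQ: "{A, B, P, Q} \<subseteq> carrier_mat n n" "Q * P = 1\<^sub>m n" "A = P * B * Q"
    using similar_matD[OF assms] by blast
  have carrier: "B \<in> carrier_mat n n" "P \<in> carrier_mat n n" "Q \<in> carrier_mat n n"
    using PQ(1) by auto
  then have "mat_trace A = mat_trace (Q * (P * B))"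
    using mat_trace_mult_commute[of "P * B" n n Q] PQ(3) by auto
  also have "Q * (P * B) = B"
    using carrier PQ(2) by (simp add: assoc_mult_mat[symmetric, of Q n n P n B n])
  finally show ?thesis .
qed

lemma upper_triangular_square_diag:
  fixes B :: "'a::comm_ring_1 mat"
  assumes B: "B \<in> carrier_mat n n" "upper_triangular B" and i: "i < n"
  shows "(B * B) $$ (i, i) = B $$ (i, i) ^ 2"
proof -
  have "(B * B) $$ (i, i) = (\<Sum>j\<in>{0..<n}. B $$ (i, j) * B $$ (j, i))"
    using B i by (simp add: scalar_prod_def)
  also have "\<dots> = (\<Sum>j\<in>{i}. B $$ (i, j) * B $$ (j, i))"
  proof (intro sum.mono_neutral_right ballI)
    fix j assume "j \<in> {0..<n} - {i}"
    then have "j < i \<and> j < n \<or> i < j \<and> j < n"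
      by auto
    then show "B $$ (i, j) * B $$ (j, i) = 0"
      using upper_triangularD[OF B(2), of j i] upper_triangularD[OF B(2), of i j] B(1) i by auto
  qed (use i in auto)
  finally show ?thesis
    by (simp add: power2_eq_square)
qed

lemma sum_proots_char_poly_square:
  fixes A :: "complex mat"
  assumes A: "A \<in> carrier_mat n n"
  shows "(\<Sum>z\<in>#proots (char_poly A). z ^ 2) = mat_trace (A * A)"
proof -
  obtain B where B: "B \<in> carrier_mat n n" "upper_triangular B" "similar_mat A B"
    using schur_triangularization[OF A] .
  have "similar_mat (A ^\<^sub>m 2) (B ^\<^sub>m 2)"
    using similar_mat_wit_pow B(3) unfolding similar_mat_def by blast
  then have "similar_mat (A * A) (B * B)"
    using A B(1) by (simp add: numeral_2_eq_2)
  then have "mat_trace (A * A) = mat_trace (B * B)"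
    by (rule mat_trace_similar)
  also have "\<dots> = (\<Sum>i<n. B $$ (i, i) ^ 2)"
    using B(1) upper_triangular_square_diag[OF B(1,2)] by (simp add: mat_trace_def)
  also have "\<dots> = (\<Sum>z\<in>#mset (diag_mat B). z ^ 2)"
    using B(1) by (simp add: diag_mat_def multiset.map_comp comp_def sum_unfold_sum_mset atLeast0LessThan)
  finally show ?thesis
    using proots_char_poly_upper_triangular[OF B(1,2)] char_poly_similar[OF B(3)] by simp
qed

section \<open>Blow-ups of bipartite matrices\<close>

definition partition_mat :: "nat \<Rightarrow> nat \<Rightarrow> (nat \<Rightarrow> nat) \<Rightarrow> 'a::zero_neq_one mat" where
  "partition_mat N n \<pi> = mat N n (\<lambda>(a, l). of_bool (l = \<pi> a))"

definition blowup_mat :: "nat \<Rightarrow> (nat \<Rightarrow> nat) \<Rightarrow> 'a mat \<Rightarrow> 'a mat" where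
  "blowup_mat N \<pi> S = mat N N (\<lambda>(a, b). S $$ (\<pi> a, \<pi> b))"

lemma partition_mat_mult:
  fixes S :: "'a::semiring_1 mat"
  assumes "S \<in> carrier_mat n k" and "\<pi> ` {..<N} \<subseteq> {..<n}"
  shows "partition_mat N n \<pi> * S = mat N k (\<lambda>(a, j). S $$ (\<pi> a, j))"
  using assms by (intro eq_matI) (auto simp: partition_mat_def scalar_prod_def)

lemma mult_partition_mat_transpose:
  fixes S :: "'a::semiring_1 mat"
  assumes "S \<in> carrier_mat k n" and "\<pi> ` {..<N} \<subseteq> {..<n}"
  shows "S * (partition_mat N n \<pi>)\<^sup>T = mat k N (\<lambda>(i, b). S $$ (i, \<pi> b))"
  using assms by (intro eq_matI) (auto simp: partition_mat_def scalar_prod_def)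

lemma partition_mat_gram:
  "(partition_mat N n \<pi>)\<^sup>T * partition_mat N n \<pi> =
    mat_diag n (\<lambda>l. of_nat (card {a. a < N \<and> \<pi> a = l}) :: 'a::semiring_1)"
proof -
  have "{0..<N} \<inter> {a. l = \<pi> a} = {a. a < N \<and> \<pi> a = l}" for l
    by auto
  moreover have "{0..<N} \<inter> {a. l = \<pi> a} \<inter> {a. l' = \<pi> a} = {}" if "l \<noteq> l'" for l l'
    using that by auto
  ultimately show ?thesis
    by (intro eq_matI) (auto simp: partition_mat_def mat_diag_def scalar_prod_def)
qed

lemma proots_char_poly_blowup_mat:
  fixes S :: "'a::field_char_0 mat"
  assumes S: "S \<in> carrier_mat n n" and \<pi>: "\<pi> ` {..<N} \<subseteq> {..<n}"
  shows "proots (char_poly (blowup_mat N \<pi> S)) + replicate_mset n 0 =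
    proots (char_poly (S * mat_diag n (\<lambda>l. of_nat (card {a. a < N \<and> \<pi> a = l})))) +
    replicate_mset N 0"
proof -
  define P :: "'a mat" where "P = partition_mat N n \<pi>"
  have P: "P \<in> carrier_mat N n" and SP: "S * P\<^sup>T \<in> carrier_mat n N"
    using S by (auto simp: P_def partition_mat_def)
  have "P * (S * P\<^sup>T) = mat N N (\<lambda>(a, b). mat n N (\<lambda>(i, b). S $$ (i, \<pi> b)) $$ (\<pi> a, b))"
    unfolding P_def mult_partition_mat_transpose[OF S \<pi>] by (rule partition_mat_mult[OF _ \<pi>]) simp
  also have "\<dots> = blowup_mat N \<pi> S"
    using \<pi> by (intro eq_matI) (auto simp: blowup_mat_def)
  finally have "P * (S * P\<^sup>T) = blowup_mat N \<pi> S" .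
  moreover have "S * P\<^sup>T * P = S * mat_diag n (\<lambda>l. of_nat (card {a. a < N \<and> \<pi> a = l}))"
    using S P by (simp add: assoc_mult_mat[of S n n "P\<^sup>T" N P n] P_def partition_mat_gram)
  ultimately show ?thesis
    using proots_char_poly_mult_commute[OF P SP] by simp
qed

definition bipartite_mat :: "nat \<Rightarrow> 'a::zero mat \<Rightarrow> bool" where
  "bipartite_mat n S \<longleftrightarrow>
    (\<forall>i < dim_row S. \<forall>j < dim_col S. (i < n \<longleftrightarrow> j < n) \<longrightarrow> S $$ (i, j) = 0)"

lemma similar_mat_bipartite_scale:
  fixes S :: "'a::field mat"
  assumes S: "S \<in> carrier_mat N N" "bipartite_mat n S"
    and c: "c * c = \<alpha> * \<beta>" "c \<noteq> 0" "\<beta> \<noteq> 0"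
  shows "similar_mat (S * mat_diag N (\<lambda>j. if j < n then \<alpha> else \<beta>)) (c \<cdot>\<^sub>m S)"
proof -
  define e where "e j = (if j < n then 1 else c / \<beta>)" for j
  define E' where "E' = mat_diag N (\<lambda>j. inverse (e j))"
  have "e j \<noteq> 0" for j
    using c by (simp add: e_def)
  then have inverse: "mat_diag N e * E' = 1\<^sub>m N" "E' * mat_diag N e = 1\<^sub>m N"
    by (simp_all add: E'_def)
  have entry: "e i * (c * S $$ (i, j)) * inverse (e j) = S $$ (i, j) * (if j < n then \<alpha> else \<beta>)"
    if "i < N" "j < N" for i j
    using S that c by (auto simp: bipartite_mat_def e_def field_simps)
  have "mat_diag N e * (c \<cdot>\<^sub>m S) * E' = S * mat_diag N (\<lambda>j. if j < n then \<alpha> else \<beta>)"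
    using S unfolding E'_def
    by (simp add: mat_diag_mult_left[of "c \<cdot>\<^sub>m S" N N] mat_diag_mult_right[of _ N N]
        mat_diag_mult_right[of S N N]) (intro eq_matI; simp add: entry)
  with S inverse show ?thesis
    unfolding similar_mat_def similar_mat_wit_def Let_def
    by (intro exI[of _ E', THEN exI[of _ "mat_diag N e"]]) (auto simp: E'_def)
qed

section \<open>Spectra of \<open>S\<^sub>p\<^sup>k(\<Gamma>)\<close>\<close>

lemma S_adj_carrier [simp]: "S_adj n m ed th \<in> carrier_mat (n + m) (n + m)"
  by (simp add: S_adj_def Sp_adj_def)

lemma S_adj_dim [simp]:
  "dim_row (S_adj n m ed th) = n + m" "dim_col (S_adj n m ed th) = n + m"
  by (simp_all add: S_adj_def Sp_adj_def)

lemma S_adj_index: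
  assumes "a < n + m" and "b < n + m"
  shows "S_adj n m ed th $$ (a, b) =
    (if a < n \<and> n \<le> b \<and> incident ed a (b - n) then real_of_int (th a (b - n))
     else if b < n \<and> n \<le> a \<and> incident ed b (a - n) then real_of_int (th b (a - n))
     else 0)"
proof -
  have "(a - n) mod m = a - n" "(b - n) mod m = b - n"
    using assms by (cases "m = 0"; simp)+
  then show ?thesis
    using assms by (simp add: S_adj_def Sp_adj_def)
qed

lemma bipartite_S_adj: "bipartite_mat n (S_adj n m ed th)"
  by (auto simp: bipartite_mat_def S_adj_index)

lemma Spk_adj_carrier:
  "Spk_adj n m ed th p k \<in> carrier_mat ((p + 1) * n + (k + 1) * m) ((p + 1) * n + (k + 1) * m)"
  by (simp add: Spk_adj_def Let_def)

lemma size_spectrum_mset: "A \<in> carrier_mat N N \<Longrightarrow> size (spectrum_mset A) = N"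
  using degree_monic_char_poly[of "map_mat complex_of_real A" N]
  by (simp add: spectrum_mset_def size_proots_complex)

(* The vertex of S(Gamma) copied by a vertex of S_p^k(Gamma): v_i^(s) is a copy of v_i,
   e_j^(t) a copy of e_j, which has index n + j in S(Gamma). *)
definition Spk_collapse :: "nat \<Rightarrow> nat \<Rightarrow> nat \<Rightarrow> nat \<Rightarrow> nat" where
  "Spk_collapse n m p a = (if a < (p + 1) * n then a mod n else n + (a - (p + 1) * n) mod m)"

lemma Spk_collapse_range: "Spk_collapse n m p ` {..<(p + 1) * n + (k + 1) * m} \<subseteq> {..<n + m}"
proof -
  have "a mod n < n + m" if "a < (p + 1) * n" for a
    using that by (cases "n = 0") (auto intro: trans_less_add1)
  moreover have "(a - (p + 1) * n) mod m < m" if "\<not> a < (p + 1) * n" "a < (p + 1) * n + (k + 1) * m" for a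
    using that by (cases "m = 0") auto
  ultimately show ?thesis
    by (auto simp: Spk_collapse_def)
qed

lemma Spk_adj_eq_blowup_mat:
  "Spk_adj n m ed th p k =
    blowup_mat ((p + 1) * n + (k + 1) * m) (Spk_collapse n m p) (S_adj n m ed th)"
proof (rule eq_matI)
  let ?N = "(p + 1) * n + (k + 1) * m" and ?\<pi> = "Spk_collapse n m p"
  fix a b
  assume "a < dim_row (blowup_mat ?N ?\<pi> (S_adj n m ed th))"
    and "b < dim_col (blowup_mat ?N ?\<pi> (S_adj n m ed th))"
  then have ab: "a < ?N" "b < ?N"
    by (simp_all add: blowup_mat_def)
  have "?\<pi> a < n + m" "?\<pi> b < n + m"
    using Spk_collapse_range[of n m p k] ab by auto
  moreover have "n \<le> x mod n \<longleftrightarrow> n = 0" for x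
    using mod_less_divisor[of n x] by (cases "n = 0") linarith+
  ultimately show "Spk_adj n m ed th p k $$ (a, b) = blowup_mat ?N ?\<pi> (S_adj n m ed th) $$ (a, b)"
    using ab by (cases "n = 0") (auto simp: Spk_adj_def blowup_mat_def S_adj_index Spk_collapse_def Let_def)
qed (simp_all add: Spk_adj_def blowup_mat_def Let_def)

lemma card_Spk_collapse_fibre:
  assumes "l < n + m"
  shows "card {a. a < (p + 1) * n + (k + 1) * m \<and> Spk_collapse n m p a = l} =
    (if l < n then p + 1 else k + 1)"
proof -
  have mod_n: "x mod n < n" if "x < (p + 1) * n" for x
    using that by (cases "n = 0") auto
  show ?thesis
  proof (cases "l < n")
    case True
    then have "{a. a < (p + 1) * n + (k + 1) * m \<and> Spk_collapse n m p a = l} =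
        {a. a < (p + 1) * n \<and> a mod n = l}"
      by (auto simp: Spk_collapse_def)
    with True show ?thesis
      using card_residue_class[of l n "p + 1"] by simp
  next
    case False
    then have "{a. a < (p + 1) * n + (k + 1) * m \<and> Spk_collapse n m p a = l} =
        (+) ((p + 1) * n) ` {i. i < (k + 1) * m \<and> i mod m = l - n}"
    proof (intro equalityI subsetI)
      fix a assume a: "a \<in> {a. a < (p + 1) * n + (k + 1) * m \<and> Spk_collapse n m p a = l}"
      then have "\<not> a < (p + 1) * n"
        using mod_n False by (auto simp: Spk_collapse_def)
      then show "a \<in> (+) ((p + 1) * n) ` {i. i < (k + 1) * m \<and> i mod m = l - n}"
        using a by (auto simp: Spk_collapse_def image_iff intro!: exI[of _ "a - (p + 1) * n"])
    qed (use False in \<open>auto simp: Spk_collapse_def\<close>)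
    moreover have "l - n < m"
      using False assms by simp
    ultimately show ?thesis
      using False card_residue_class[of "l - n" m "k + 1"] by (simp add: card_image)
  qed
qed

lemma spectrum_Spk_adj:
  "spectrum_mset (Spk_adj n m ed th p k) + replicate_mset (n + m) 0 =
    image_mset ((*) (sqrt (real ((p + 1) * (k + 1))))) (spectrum_mset (S_adj n m ed th)) +
    replicate_mset ((p + 1) * n + (k + 1) * m) 0"
proof -
  let ?N = "(p + 1) * n + (k + 1) * m" and ?\<pi> = "Spk_collapse n m p"
  define S where "S = map_mat complex_of_real (S_adj n m ed th)"
  define c where "c = complex_of_real (sqrt (real ((p + 1) * (k + 1))))"
  have S: "S \<in> carrier_mat (n + m) (n + m)" "bipartite_mat n S"
    using bipartite_S_adj[of n m ed th] by (auto simp: S_def bipartite_mat_def)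
  have "?\<pi> a < n + m" if "a < ?N" for a
    using Spk_collapse_range[of n m p k] that by auto
  then have "map_mat complex_of_real (Spk_adj n m ed th p k) = blowup_mat ?N ?\<pi> S"
    by (intro eq_matI) (auto simp: Spk_adj_eq_blowup_mat blowup_mat_def S_def)
  then have "spectrum_mset (Spk_adj n m ed th p k) + replicate_mset (n + m) 0 =
      proots (char_poly (S * mat_diag (n + m) (\<lambda>l. of_nat (card {a. a < ?N \<and> ?\<pi> a = l})))) +
      replicate_mset ?N 0"
    using proots_char_poly_blowup_mat[OF S(1) Spk_collapse_range] by (simp add: spectrum_mset_def)
  also have "mat_diag (n + m) (\<lambda>l. of_nat (card {a. a < ?N \<and> ?\<pi> a = l})) =
      mat_diag (n + m) (\<lambda>l. if l < n then of_nat (p + 1) else of_nat (k + 1))"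
    using card_Spk_collapse_fibre[of _ n m p k] by (intro eq_matI) (simp_all add: mat_diag_def)
  also have "char_poly (S * \<dots>) = char_poly (c \<cdot>\<^sub>m S)"
  proof (rule char_poly_similar, rule similar_mat_bipartite_scale[OF S])
    show "c * c = of_nat (p + 1) * of_nat (k + 1)"
      unfolding c_def of_real_mult[symmetric] real_sqrt_mult_self by (simp add: algebra_simps)
    show "c \<noteq> 0"
      unfolding c_def by (simp del: of_nat_mult of_nat_add)
  qed (simp only: of_nat_eq_0_iff; simp)
  finally show ?thesis
    unfolding proots_char_poly_smult[OF S(1)] by (simp add: spectrum_mset_def S_def c_def)
qed

lemma energy_Spk_adj:
  "energy (Spk_adj n m ed th p k) = sqrt (real ((p + 1) * (k + 1))) * energy (S_adj n m ed th)"
proof -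
  let ?c = "sqrt (real ((p + 1) * (k + 1)))"
  have "(\<Sum>z\<in>#spectrum_mset (Spk_adj n m ed th p k) + replicate_mset (n + m) 0. cmod z) =
      (\<Sum>z\<in>#image_mset ((*) ?c) (spectrum_mset (S_adj n m ed th)) +
        replicate_mset ((p + 1) * n + (k + 1) * m) 0. cmod z)"
    by (simp only: spectrum_Spk_adj)
  then show ?thesis
    by (simp add: energy_def multiset.map_comp comp_def norm_mult sum_mset_distrib_left)
qed

lemma mat_trace_S_adj_square:
  assumes G: "signed_graph n m ed sg" and O: "orientation m ed sg th"
  shows "mat_trace (S_adj n m ed th * S_adj n m ed th) = 4 * real m"
proof -
  let ?A = "S_adj n m ed th"
  define g :: "nat \<Rightarrow> nat \<Rightarrow> real" where
    "g a b = of_bool (a < n \<and> n \<le> b \<and> incident ed a (b - n))" for a b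
  have "th a j * th a j = 1" if "j < m" "incident ed a j" for a j
    using O that unfolding orientation_def incident_def by auto
  then have "?A $$ (a, b) * ?A $$ (b, a) = g a b + g b a" if "a < n + m" "b < n + m" for a b
    using that by (auto simp: S_adj_index g_def simp flip: of_int_mult)
  then have "mat_trace (?A * ?A) = (\<Sum>a<n + m. \<Sum>b<n + m. g a b + g b a)"
    by (simp add: mat_trace_def scalar_prod_def atLeast0LessThan)
  also have "\<dots> = 2 * (\<Sum>a<n + m. \<Sum>b<n + m. g a b)"
    by (simp add: sum.distrib sum.swap[of "\<lambda>a b. g b a"])
  also have "(\<Sum>a<n + m. \<Sum>b<n + m. g a b) = (\<Sum>a<n. \<Sum>j<m. of_bool (incident ed a j))"
    by (simp add: sum_lessThan_add g_def)
  also have "\<dots> = (\<Sum>j<m. \<Sum>a<n. of_bool (incident ed a j))"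
    by (rule sum.swap)
  also have "\<dots> = (\<Sum>j<m. 2)"
  proof (rule sum.cong)
    fix j assume "j \<in> {..<m}"
    then have "{..<n} \<inter> {a. incident ed a j} = {fst (ed j), snd (ed j)}"
      and "fst (ed j) \<noteq> snd (ed j)"
      using G unfolding signed_graph_def incident_def by auto
    then show "(\<Sum>a<n. of_bool (incident ed a j)) = (2::real)"
      by simp
  qed simp
  finally show ?thesis
    by simp
qed

lemma sum_spectrum_S_adj_square:
  assumes "signed_graph n m ed sg" and "orientation m ed sg th"
  shows "(\<Sum>z\<in>#spectrum_mset (S_adj n m ed th). z ^ 2) = 4 * of_nat m"
proof -
  let ?A = "S_adj n m ed th"
  have "(\<Sum>z\<in>#spectrum_mset ?A. z ^ 2) = mat_trace (map_mat complex_of_real (?A * ?A))"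
    unfolding spectrum_mset_def
    by (simp add: sum_proots_char_poly_square[of _ "n + m"]
        of_real_hom.mat_hom_mult[OF S_adj_carrier S_adj_carrier])
  also have "\<dots> = complex_of_real (mat_trace (?A * ?A))"
    by (simp add: mat_trace_def)
  finally show ?thesis
    using mat_trace_S_adj_square[OF assms] by simp
qed

lemma cospectral_S_adj_if_cospectral_Spk_adj:
  assumes G1: "signed_graph n1 m1 ed1 sg1" and O1: "orientation m1 ed1 sg1 th1"
    and G2: "signed_graph n2 m2 ed2 sg2" and O2: "orientation m2 ed2 sg2 th2"
    and cospectral: "cospectral (Spk_adj n1 m1 ed1 th1 p k) (Spk_adj n2 m2 ed2 th2 p k)"
  shows "cospectral (S_adj n1 m1 ed1 th1) (S_adj n2 m2 ed2 th2)"
proof -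
  define c where "c = complex_of_real (sqrt (real ((p + 1) * (k + 1))))"
  define D1 where "D1 = spectrum_mset (S_adj n1 m1 ed1 th1)"
  define D2 where "D2 = spectrum_mset (S_adj n2 m2 ed2 th2)"
  define N where "N = (p + 1) * n1 + (k + 1) * m1"
  have "c \<noteq> 0"
    unfolding c_def by (simp del: of_nat_mult of_nat_add)
  have N: "(p + 1) * n2 + (k + 1) * m2 = N"
    using cospectral size_spectrum_mset[OF Spk_adj_carrier, of n1 m1 ed1 th1 p k]
      size_spectrum_mset[OF Spk_adj_carrier, of n2 m2 ed2 th2 p k]
    by (simp add: cospectral_def N_def)
  define S where "S = spectrum_mset (Spk_adj n1 m1 ed1 th1 p k)"
  have "S + replicate_mset (n1 + m1) 0 = image_mset ((*) c) D1 + replicate_mset N 0"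
    using spectrum_Spk_adj[of n1 m1 ed1 th1 p k] by (simp add: S_def D1_def c_def N_def)
  moreover have "S + replicate_mset (n2 + m2) 0 = image_mset ((*) c) D2 + replicate_mset N 0"
    using spectrum_Spk_adj[of n2 m2 ed2 th2 p k] cospectral N
    by (simp add: S_def D2_def c_def cospectral_def)
  ultimately have D: "D1 + replicate_mset (n2 + m2) 0 = D2 + replicate_mset (n1 + m1) 0"
    by (rule image_mset_mult_pad_cancel[OF \<open>c \<noteq> 0\<close>])
  have "(\<Sum>z\<in>#D1 + replicate_mset (n2 + m2) 0. z ^ 2) = (\<Sum>z\<in>#D2 + replicate_mset (n1 + m1) 0. z ^ 2)"
    unfolding D ..
  then have "(\<Sum>z\<in>#D1. z ^ 2) = (\<Sum>z\<in>#D2. z ^ 2)"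
    by simp
  then have "m1 = m2"
    using sum_spectrum_S_adj_square[OF G1 O1] sum_spectrum_S_adj_square[OF G2 O2]
    by (simp add: D1_def D2_def)
  with N have "(p + 1) * n1 = (p + 1) * n2"
    by (simp add: N_def)
  then have "n1 = n2"
    by (simp only: mult_cancel1) simp
  with \<open>m1 = m2\<close> D show ?thesis
    by (simp add: cospectral_def D1_def D2_def)
qed

lemma Sp_adj_eq_Spk_adj: "1 \<le> p \<Longrightarrow> Sp_adj n m ed th p = Spk_adj n m ed th 0 (p - 1)"
  by (intro eq_matI) (auto simp: Sp_adj_def Spk_adj_def Let_def)

theorem corollary4p11:
  fixes n1 m1 n2 m2 p k :: nat
    and ed1 ed2 :: "nat \<Rightarrow> nat \<times> nat" and sg1 sg2 :: "nat \<Rightarrow> int"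
    and th1 th2 :: "nat \<Rightarrow> nat \<Rightarrow> int"
  assumes G1: "signed_graph n1 m1 ed1 sg1" and O1: "orientation m1 ed1 sg1 th1"
    and G2: "signed_graph n2 m2 ed2 sg2" and O2: "orientation m2 ed2 sg2 th2"
    and nc: "\<not> cospectral (S_adj n1 m1 ed1 th1) (S_adj n2 m2 ed2 th2)"
    and ee: "equienergetic (S_adj n1 m1 ed1 th1) (S_adj n2 m2 ed2 th2)"
    and p: "1 \<le> p" and k: "k = p \<or> k = p - 1"
  shows "(\<not> cospectral (Sp_adj n1 m1 ed1 th1 p) (Sp_adj n2 m2 ed2 th2 p) \<and>
          equienergetic (Sp_adj n1 m1 ed1 th1 p) (Sp_adj n2 m2 ed2 th2 p)) \<and>
         (\<not> cospectral (Spk_adj n1 m1 ed1 th1 p k) (Spk_adj n2 m2 ed2 th2 p k) \<and>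
          equienergetic (Spk_adj n1 m1 ed1 th1 p k) (Spk_adj n2 m2 ed2 th2 p k))"
proof -
  have Spk: "\<not> cospectral (Spk_adj n1 m1 ed1 th1 q l) (Spk_adj n2 m2 ed2 th2 q l) \<and>
      equienergetic (Spk_adj n1 m1 ed1 th1 q l) (Spk_adj n2 m2 ed2 th2 q l)" for q l
    using cospectral_S_adj_if_cospectral_Spk_adj[OF G1 O1 G2 O2] nc ee
    by (auto simp: equienergetic_def energy_Spk_adj)
  show ?thesis
    using Spk[of 0 "p - 1"] Spk[of p k] by (simp add: Sp_adj_eq_Spk_adj[OF p])
qed

end
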